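(* Let $n=2k+1$ with $k\ge 1$. If $S$ is a strong resolving set of $U_n$, then $|S|\ge 2n$.
   Context: For $n\ge 3$, $U_n$ is the graph with vertex set $\{a_i,b_i,c_i,d_i,e_i : 1\le i\le n\}$ and edge set $\{a_ia_{i+1}, b_ib_{i+1}, e_ie_{i+1}, a_ib_i, b_ic_i, c_id_i, d_ie_i, c_{i+1}d_i : 1\le i\le n\}$, indices taken modulo $n$. $d$ is the graph distance. A vertex $w$ strongly resolves distinct vertices $u,v$ if $d(v,w)=d(v,u)+d(u,w)$ or $d(u,w)=d(u,v)+d(v,w)$. A set $S$ is a strong resolving set if every two distinct vertices are strongly resolved by some vertex of $S$. *)

theory Defs
  imports Main
begin

text \<open>Vertices of U_n. Index i ranges over 0..n-1 (paper uses 1..n; indices modulo n).\<close>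
datatype vtx = A nat | B nat | C nat | D nat | E nat

definition U_verts :: "nat \<Rightarrow> vtx set" where
  "U_verts n = (\<Union>i\<in>{..<n}. {A i, B i, C i, D i, E i})"

definition U_edge0 :: "nat \<Rightarrow> vtx \<Rightarrow> vtx \<Rightarrow> bool" where
  "U_edge0 n u v \<longleftrightarrow> (\<exists>i<n.
      (u = A i \<and> v = A (Suc i mod n)) \<or>
      (u = B i \<and> v = B (Suc i mod n)) \<or>
      (u = E i \<and> v = E (Suc i mod n)) \<or>
      (u = A i \<and> v = B i) \<or>
      (u = B i \<and> v = C i) \<or>
      (u = C i \<and> v = D i) \<or>
      (u = D i \<and> v = E i) \<or>
      (u = C (Suc i mod n) \<and> v = D i))"

definition U_adj :: "nat \<Rightarrow> vtx \<Rightarrow> vtx \<Rightarrow> bool" where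
  "U_adj n u v \<longleftrightarrow> U_edge0 n u v \<or> U_edge0 n v u"

text \<open>Graph distance: length of a shortest walk (U_n is connected).\<close>
definition U_dist :: "nat \<Rightarrow> vtx \<Rightarrow> vtx \<Rightarrow> nat" where
  "U_dist n u v = (LEAST k. (U_adj n ^^ k) u v)"

definition strongly_resolves :: "nat \<Rightarrow> vtx \<Rightarrow> vtx \<Rightarrow> vtx \<Rightarrow> bool" where
  "strongly_resolves n w u v \<longleftrightarrow>
     U_dist n v w = U_dist n v u + U_dist n u w \<or> U_dist n u w = U_dist n u v + U_dist n v w"

definition strong_resolving_set :: "nat \<Rightarrow> vtx set \<Rightarrow> bool" where
  "strong_resolving_set n S \<longleftrightarrow> S \<subseteq> U_verts n \<and>
     (\<forall>u\<in>U_verts n. \<forall>v\<in>U_verts n. u \<noteq> v \<longrightarrow> (\<exists>w\<in>S. strongly_resolves n w u v))"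

end

theory Submission
  imports Defs
begin

text \<open>
  Call \<open>u\<close> maximally distant from \<open>v\<close> if no neighbour of \<open>u\<close> is farther from \<open>v\<close>
  than \<open>u\<close> itself. Then no vertex \<open>w \<noteq> u\<close> lies beyond \<open>u\<close> on a geodesic from \<open>v\<close>,
  since the first step of a geodesic from \<open>u\<close> to \<open>w\<close> would not increase the distance
  from \<open>v\<close>. Hence only \<open>u\<close> and \<open>v\<close> strongly resolve a mutually maximally distant pair,
  and a strong resolving set meets every such pair.

  For \<open>n = 2k + 1\<close> the pairs \<open>{A\<^sub>i, E\<^sub>i\<^sub>+\<^sub>k}\<close> and \<open>{C\<^sub>i, D\<^sub>i\<^sub>+\<^sub>k}\<close> are \<open>2n\<close>
  pairwise disjoint mutually maximally distant pairs. Their distances are at least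
  \<open>k + 4\<close> and \<open>k + 2\<close> by 1-Lipschitz potentials, and explicit walks show that all
  neighbours are within these distances.
\<close>

definition walk_dist :: "('a \<Rightarrow> 'a \<Rightarrow> bool) \<Rightarrow> 'a \<Rightarrow> 'a \<Rightarrow> nat" where
  "walk_dist R u v = (LEAST m. (R ^^ m) u v)"

lemma walk_dist_le: "(R ^^ m) u v \<Longrightarrow> walk_dist R u v \<le> m"
  unfolding walk_dist_def by (rule Least_le)

lemma relpowp_walk_dist: "(R ^^ m) u v \<Longrightarrow> (R ^^ walk_dist R u v) u v"
  unfolding walk_dist_def by (rule LeastI)

lemma relpowp_symp:
  assumes "symp R" and "(R ^^ m) u v"
  shows "(R ^^ m) v u"
  using assms(2)
proof (induction m arbitrary: v)
  case 0
  then show ?case by simp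
next
  case (Suc m)
  then obtain y where "(R ^^ m) u y" and "R y v" by auto
  with Suc.IH show ?case by (meson assms(1) relpowp_Suc_I2 sympD)
qed

lemma walk_dist_symp: "symp R \<Longrightarrow> walk_dist R u v = walk_dist R v u"
  unfolding walk_dist_def by (metis relpowp_symp)

lemma walk_dist_lipschitz:
  assumes lip: "\<And>x y. R x y \<Longrightarrow> h y \<le> h x + 1" and "(R ^^ m) u v"
  shows "h v \<le> h u + walk_dist R u v"
proof -
  have "h y \<le> h u + l" if "(R ^^ l) u y" for l y
    using that
  proof (induction l arbitrary: y)
    case (Suc l)
    then obtain x where "(R ^^ l) u x" and "R x y" by auto
    with Suc.IH lip[of x y] show ?case by fastforce
  qed simp
  then show ?thesis using relpowp_walk_dist[OF assms(2)] .
qed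

definition maximally_distant :: "('a \<Rightarrow> 'a \<Rightarrow> bool) \<Rightarrow> 'a \<Rightarrow> 'a \<Rightarrow> bool" where
  "maximally_distant R v u \<longleftrightarrow> (\<forall>u'. R u u' \<longrightarrow> walk_dist R v u' \<le> walk_dist R v u)"

lemma maximally_distant_geodesic_end:
  assumes max: "maximally_distant R v u" and "(R ^^ a) v u" and "(R ^^ b) u w"
    and geodesic: "walk_dist R v w = walk_dist R v u + walk_dist R u w"
  shows "w = u"
proof (rule ccontr)
  assume "w \<noteq> u"
  have "(R ^^ walk_dist R u w) u w" using assms(3) by (rule relpowp_walk_dist)
  with \<open>w \<noteq> u\<close> obtain l where l: "walk_dist R u w = Suc l"
    by (cases "walk_dist R u w") auto
  with \<open>(R ^^ walk_dist R u w) u w\<close> obtain u' where "R u u'" and "(R ^^ l) u' w"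
    by (metis relpowp_Suc_D2)
  from \<open>R u u'\<close> have "(R ^^ Suc a) v u'" using assms(2) by (rule relpowp_Suc_I[rotated])
  then have "(R ^^ (walk_dist R v u' + l)) v w"
    using relpowp_walk_dist \<open>(R ^^ l) u' w\<close> relpowp_trans by metis
  then have "walk_dist R v w \<le> walk_dist R v u' + l" by (rule walk_dist_le)
  also have "\<dots> \<le> walk_dist R v u + l" using max \<open>R u u'\<close> by (simp add: maximally_distant_def)
  finally show False using geodesic l by simp
qed

lemma relpowp_successively: "successively R (x # xs) \<Longrightarrow> (R ^^ length xs) x (last (x # xs))"
proof (induction xs arbitrary: x)
  case (Cons y xs)
  then have "R x y" and "(R ^^ length xs) y (last (y # xs))" by simp_all
  then have "(R ^^ Suc (length xs)) x (last (y # xs))" by (rule relpowp_Suc_I2)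
  then show ?case by simp
qed simp

lemma relpowp_rotate:
  assumes step: "\<And>s. s < n \<Longrightarrow> R (X s) (X (Suc s mod n))" and "t < n"
  shows "(R ^^ m) (X t) (X ((t + m) mod n))"
proof (induction m)
  case (Suc m)
  have "R (X ((t + m) mod n)) (X (Suc ((t + m) mod n) mod n))"
    using \<open>t < n\<close> by (intro step) simp
  with Suc show ?case by (auto simp: mod_Suc_eq intro: relpowp_Suc_I)
qed (simp add: \<open>t < n\<close>)

lemma card_le_if_meets_pairs:
  assumes "finite S" and "inj_on p I" and "p ` I \<inter> I = {}"
    and meets: "\<And>v. v \<in> I \<Longrightarrow> v \<in> S \<or> p v \<in> S"
  shows "card I \<le> card S"
proof -
  define f where "f v = (if v \<in> S then v else p v)" for v
  have "inj_on f I"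
    using assms(2,3) by (auto simp: f_def inj_on_def)
  moreover have "f ` I \<subseteq> S"
    using meets by (auto simp: f_def)
  ultimately show ?thesis using assms(1) by (rule card_inj_on_le)
qed

lemma U_dist_eq_walk_dist: "U_dist n u v = walk_dist (U_adj n) u v"
  unfolding U_dist_def walk_dist_def ..

lemma symp_U_adj: "symp (U_adj n)"
  unfolding U_adj_def symp_def by blast

lemma U_adj_sym: "U_adj n u v \<Longrightarrow> U_adj n v u"
  using symp_U_adj by (rule sympD)

lemma U_walk_sym: "(U_adj n ^^ m) u v \<Longrightarrow> (U_adj n ^^ m) v u"
  using symp_U_adj by (rule relpowp_symp)

lemma U_dist_sym: "U_dist n u v = U_dist n v u"
  by (simp add: U_dist_eq_walk_dist walk_dist_symp[OF symp_U_adj])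

lemma U_dist_le_walk:
  assumes "(U_adj n ^^ m) u v" and "m \<le> L"
  shows "U_dist n u v \<le> L" and "U_dist n v u \<le> L"
  using walk_dist_le[OF assms(1)] walk_dist_le[OF U_walk_sym[OF assms(1)]] assms(2)
  by (simp_all add: U_dist_eq_walk_dist)

lemma in_U_verts_iff [simp]:
  "A t \<in> U_verts n \<longleftrightarrow> t < n" "B t \<in> U_verts n \<longleftrightarrow> t < n" "C t \<in> U_verts n \<longleftrightarrow> t < n"
  "D t \<in> U_verts n \<longleftrightarrow> t < n" "E t \<in> U_verts n \<longleftrightarrow> t < n"
  by (auto simp: U_verts_def)

lemma U_rim_walks:
  assumes "t < n" and "(t + m) mod n = t'"
  shows "(U_adj n ^^ m) (A t) (A t')" and "(U_adj n ^^ m) (B t) (B t')"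
    and "(U_adj n ^^ m) (E t) (E t')"
  using relpowp_rotate[of n "U_adj n", OF _ \<open>t < n\<close>] assms(2)
  unfolding U_adj_def U_edge0_def by blast+

lemma U_column_edges:
  assumes "t < n"
  shows "U_adj n (A t) (B t)" and "U_adj n (B t) (C t)" and "U_adj n (C t) (D t)"
    and "U_adj n (D t) (E t)"
  using assms unfolding U_adj_def U_edge0_def by blast+

lemma U_column_walks:
  assumes "t < n"
  shows "(U_adj n ^^ 4) (A t) (E t)" and "(U_adj n ^^ 3) (A t) (D t)"
    and "(U_adj n ^^ 3) (B t) (E t)" and "(U_adj n ^^ 2) (B t) (D t)"
    and "(U_adj n ^^ 2) (C t) (E t)"
  using relpowp_successively[of "U_adj n" "A t" "[B t, C t, D t, E t]"]
    relpowp_successively[of "U_adj n" "A t" "[B t, C t, D t]"]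
    relpowp_successively[of "U_adj n" "B t" "[C t, D t, E t]"]
    relpowp_successively[of "U_adj n" "B t" "[C t, D t]"]
    relpowp_successively[of "U_adj n" "C t" "[D t, E t]"]
    U_column_edges[OF assms]
  by (simp_all add: numeral_eq_Suc)

lemma U_connected:
  assumes "u \<in> U_verts n" and "v \<in> U_verts n"
  shows "(U_adj n)\<^sup>*\<^sup>* u v"
proof -
  have from_A0: "(U_adj n)\<^sup>*\<^sup>* (A 0) v" if "v \<in> U_verts n" for v
  proof -
    from that obtain t where "t < n" and v: "v \<in> {A t, B t, C t, D t, E t}"
      unfolding U_verts_def by auto
    have "(U_adj n)\<^sup>*\<^sup>* (A 0) (A t)"
      using U_rim_walks(1)[of 0 n t t] \<open>t < n\<close> by (auto intro: relpowp_imp_rtranclp)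
    with U_column_edges[OF \<open>t < n\<close>] show ?thesis
      using v by (auto intro: rtranclp.rtrancl_into_rtrancl)
  qed
  have "(U_adj n)\<^sup>*\<^sup>* u (A 0)"
    using from_A0[OF assms(1)] symp_rtranclp[OF symp_U_adj] by (blast dest: sympD)
  then show ?thesis using from_A0[OF assms(2)] by (rule rtranclp_trans)
qed

lemma walk_exists:
  assumes "u \<in> U_verts n" and "v \<in> U_verts n"
  obtains m where "(U_adj n ^^ m) u v"
  using rtranclp_imp_relpowp[OF U_connected[OF assms]] by blast

lemma strongly_resolves_maximally_distant:
  assumes "u \<in> U_verts n" and "v \<in> U_verts n" and "w \<in> U_verts n"
    and "maximally_distant (U_adj n) v u" and "maximally_distant (U_adj n) u v"
    and "strongly_resolves n w u v"
  shows "w = u \<or> w = v"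
proof -
  obtain a b c d where "(U_adj n ^^ a) v u" "(U_adj n ^^ b) u w"
    "(U_adj n ^^ c) u v" "(U_adj n ^^ d) v w"
    using walk_exists assms(1-3) by metis
  with assms(4-6) show ?thesis
    unfolding strongly_resolves_def U_dist_eq_walk_dist
    using maximally_distant_geodesic_end by metis
qed

lemma strong_resolving_set_meets_maximally_distant:
  assumes "strong_resolving_set n S" and "u \<in> U_verts n" and "v \<in> U_verts n" and "u \<noteq> v"
    and "maximally_distant (U_adj n) v u" and "maximally_distant (U_adj n) u v"
  shows "u \<in> S \<or> v \<in> S"
proof -
  from assms(1-4) obtain w where "w \<in> S" and "w \<in> U_verts n" and "strongly_resolves n w u v"
    unfolding strong_resolving_set_def by blast
  with strongly_resolves_maximally_distant[OF assms(2,3) _ assms(5,6)] show ?thesis by blast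
qed

definition cycle_dist :: "nat \<Rightarrow> nat \<Rightarrow> nat \<Rightarrow> nat" where
  "cycle_dist N c p = (let d = (p + (N - c)) mod N in min d (N - d))"

lemma cycle_dist_Suc:
  assumes "0 < N"
  shows "cycle_dist N c (Suc q mod N) \<le> cycle_dist N c q + 1"
    and "cycle_dist N c q \<le> cycle_dist N c (Suc q mod N) + 1"
proof -
  define d where "d = (q + (N - c)) mod N"
  have "d < N" using assms by (simp add: d_def)
  moreover have "(Suc q mod N + (N - c)) mod N = Suc d mod N"
    by (simp add: d_def mod_simps)
  ultimately show "cycle_dist N c (Suc q mod N) \<le> cycle_dist N c q + 1"
    and "cycle_dist N c q \<le> cycle_dist N c (Suc q mod N) + 1"
    unfolding cycle_dist_def Let_def d_def[symmetric] by (auto simp: mod_Suc)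
qed

text \<open>
  The path \<open>C\<^sub>0 D\<^sub>0 C\<^sub>1 D\<^sub>1 \<dots>\<close> closes up to a cycle of length \<open>2n\<close>. The level of a
  vertex is its position on that cycle, shared by \<open>A\<^sub>t, B\<^sub>t, C\<^sub>t\<close> and by \<open>D\<^sub>t, E\<^sub>t\<close>;
  edges of the three \<open>n\<close>-cycles change the level by two, the other edges by at most one.
\<close>

fun level :: "vtx \<Rightarrow> nat" where
  "level (A t) = 2 * t" | "level (B t) = 2 * t" | "level (C t) = 2 * t"
| "level (D t) = Suc (2 * t)" | "level (E t) = Suc (2 * t)"

definition level_dist :: "nat \<Rightarrow> nat \<Rightarrow> vtx \<Rightarrow> nat" where
  "level_dist n i v = cycle_dist (2 * n) (2 * i) (level v)"

lemma level_dist_zigzag: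
  assumes "t < n"
  shows "level_dist n i (D t) \<le> level_dist n i (C t) + 1"
    and "level_dist n i (C t) \<le> level_dist n i (D t) + 1"
    and "level_dist n i (C (Suc t mod n)) \<le> level_dist n i (D t) + 1"
    and "level_dist n i (D t) \<le> level_dist n i (C (Suc t mod n)) + 1"
proof -
  have N: "0 < 2 * n" using assms by simp
  have D: "level (D t) = Suc (level (C t)) mod (2 * n)"
    and C': "level (C (Suc t mod n)) = Suc (level (D t)) mod (2 * n)"
    using assms by (auto simp: mod_Suc)
  show "level_dist n i (D t) \<le> level_dist n i (C t) + 1"
    and "level_dist n i (C t) \<le> level_dist n i (D t) + 1"
    using cycle_dist_Suc[OF N, of "2 * i" "level (C t)", folded D]
    by (simp_all add: level_dist_def)
  show "level_dist n i (C (Suc t mod n)) \<le> level_dist n i (D t) + 1"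
    and "level_dist n i (D t) \<le> level_dist n i (C (Suc t mod n)) + 1"
    using cycle_dist_Suc[OF N, of "2 * i" "level (D t)", folded C']
    by (simp_all add: level_dist_def)
qed

text \<open>
  Potentials that grow by at most one along every edge and vanish at \<open>A\<^sub>i\<close>, resp. \<open>C\<^sub>i\<close>.
  An edge of an \<open>n\<close>-cycle advances two levels, so they count half the level distance,
  rounded up; near \<open>C\<^sub>i\<close> the zigzag itself is shorter, whence the minimum.
\<close>

definition potential_A :: "nat \<Rightarrow> nat \<Rightarrow> vtx \<Rightarrow> nat" where
  "potential_A n i v = (level_dist n i v + 1) div 2 +
     (case v of A _ \<Rightarrow> 0 | B _ \<Rightarrow> 1 | C _ \<Rightarrow> 2 | D _ \<Rightarrow> 2 | E _ \<Rightarrow> 3)"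

definition potential_C :: "nat \<Rightarrow> nat \<Rightarrow> vtx \<Rightarrow> nat" where
  "potential_C n i v = (let r = level_dist n i v; h = (r + 1) div 2 in
     case v of A _ \<Rightarrow> h + 2 | B _ \<Rightarrow> h + 1 | C _ \<Rightarrow> min r (h + 2) | D _ \<Rightarrow> min r (h + 2)
     | E _ \<Rightarrow> h + 1)"

lemma potentials_lipschitz:
  assumes "U_adj n u v"
  shows "potential_A n i v \<le> potential_A n i u + 1" and "potential_C n i v \<le> potential_C n i u + 1"
proof -
  have "potential_A n i v \<le> potential_A n i u + 1 \<and> potential_A n i u \<le> potential_A n i v + 1 \<and>
    potential_C n i v \<le> potential_C n i u + 1 \<and> potential_C n i u \<le> potential_C n i v + 1"
    if "U_edge0 n u v" for u v
  proof -
    from that obtain t where "t < n" and edge: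
      "(u = A t \<and> v = A (Suc t mod n)) \<or> (u = B t \<and> v = B (Suc t mod n)) \<or>
       (u = E t \<and> v = E (Suc t mod n)) \<or> (u = A t \<and> v = B t) \<or> (u = B t \<and> v = C t) \<or>
       (u = C t \<and> v = D t) \<or> (u = D t \<and> v = E t) \<or> (u = C (Suc t mod n) \<and> v = D t)"
      unfolding U_edge0_def by blast
    then have "Suc t mod n < n" by simp
    note zigzag = level_dist_zigzag[OF \<open>t < n\<close>, of i] level_dist_zigzag[OF \<open>Suc t mod n < n\<close>, of i]
    have same: "level_dist n i (A s) = level_dist n i (C s)"
      "level_dist n i (B s) = level_dist n i (C s)"
      "level_dist n i (E s) = level_dist n i (D s)" for s
      by (simp_all add: level_dist_def)
    from edge show ?thesis
      using zigzag unfolding potential_A_def potential_C_def Let_def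
      by (elim disjE conjE; simp add: same; linarith)
  qed
  with assms show "potential_A n i v \<le> potential_A n i u + 1"
    and "potential_C n i v \<le> potential_C n i u + 1"
    unfolding U_adj_def by blast+
qed

lemma level_dist_column:
  assumes "i < n"
  shows "level_dist n i (A i) = 0" and "level_dist n i (C i) = 0"
  using assms by (simp_all add: level_dist_def cycle_dist_def)

lemma level_dist_opposite:
  assumes "n = 2 * k + 1" and "i < n"
  shows "level_dist n i (D ((i + k) mod n)) = n" and "level_dist n i (E ((i + k) mod n)) = n"
proof -
  have "(Suc (2 * ((i + k) mod n)) + (2 * n - 2 * i)) mod (2 * n)
      = ((2 * i + 2 * k) mod (2 * n) + (1 + (2 * n - 2 * i))) mod (2 * n)"
    by (simp add: mult_mod_right)
  also have "\<dots> = (2 * i + 2 * k + (1 + (2 * n - 2 * i))) mod (2 * n)"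
    by (rule mod_add_left_eq)
  also have "2 * i + 2 * k + (1 + (2 * n - 2 * i)) = n + 2 * n"
    using assms by simp
  also have "(n + 2 * n) mod (2 * n) = n"
    using assms(2) by simp
  finally have "(Suc (2 * ((i + k) mod n)) + (2 * n - 2 * i)) mod (2 * n) = n" .
  then show "level_dist n i (D ((i + k) mod n)) = n" and "level_dist n i (E ((i + k) mod n)) = n"
    by (simp_all add: level_dist_def cycle_dist_def)
qed

lemma U_dist_A_opposite_E:
  assumes "n = 2 * k + 1" and "i < n"
  shows "k + 4 \<le> U_dist n (A i) (E ((i + k) mod n))"
proof -
  obtain m where walk: "(U_adj n ^^ m) (A i) (E ((i + k) mod n))"
    using walk_exists[of "A i" n "E ((i + k) mod n)"] assms(2) by auto
  have "potential_A n i (E ((i + k) mod n))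
      \<le> potential_A n i (A i) + U_dist n (A i) (E ((i + k) mod n))"
    using potentials_lipschitz(1) walk unfolding U_dist_eq_walk_dist by (rule walk_dist_lipschitz)
  then show ?thesis
    using level_dist_column(1)[OF assms(2)] level_dist_opposite(2)[OF assms] assms(1)
    by (simp add: potential_A_def)
qed

lemma U_dist_C_opposite_D:
  assumes "n = 2 * k + 1" and "1 \<le> k" and "i < n"
  shows "k + 2 \<le> U_dist n (C i) (D ((i + k) mod n))"
proof -
  obtain m where walk: "(U_adj n ^^ m) (C i) (D ((i + k) mod n))"
    using walk_exists[of "C i" n "D ((i + k) mod n)"] assms(3) by auto
  have "potential_C n i (D ((i + k) mod n))
      \<le> potential_C n i (C i) + U_dist n (C i) (D ((i + k) mod n))"
    using potentials_lipschitz(2) walk unfolding U_dist_eq_walk_dist by (rule walk_dist_lipschitz)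
  then show ?thesis
    using level_dist_column(2)[OF assms(3)] level_dist_opposite(1)[OF assms(1,3)] assms(1,2)
    by (simp add: potential_C_def)
qed

definition opposite_vertex :: "nat \<Rightarrow> nat \<Rightarrow> vtx \<Rightarrow> vtx" where
  "opposite_vertex n k v =
     (case v of A i \<Rightarrow> E ((i + k) mod n) | C i \<Rightarrow> D ((i + k) mod n) | _ \<Rightarrow> v)"

context
  fixes n k :: nat
  assumes n_eq: "n = 2 * k + 1" and k_pos: "1 \<le> k"
begin

lemma Suc_mod_add_twice_k:
  assumes "t < n"
  shows "(Suc t mod n + 2 * k) mod n = t"
proof -
  have "(Suc t mod n + 2 * k) mod n = (t + n) mod n"
    by (simp add: mod_add_left_eq n_eq)
  also have "\<dots> = t" using assms by simp
  finally show ?thesis .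
qed

lemma opposite_index_arith:
  assumes "i < n"
  shows "(Suc i mod n + (k - 1)) mod n = (i + k) mod n"
    and "(Suc ((i + k) mod n) mod n + k) mod n = i"
    and "t < n \<Longrightarrow> Suc t mod n = i \<Longrightarrow> ((i + k) mod n + k) mod n = t"
    and "t < n \<Longrightarrow> Suc t mod n = (i + k) mod n \<Longrightarrow> (i + (k - 1)) mod n = t"
proof -
  have "Suc i + (k - 1) = i + k" using k_pos by simp
  then show "(Suc i mod n + (k - 1)) mod n = (i + k) mod n"
    by (metis mod_add_left_eq)
  have "(Suc ((i + k) mod n) mod n + k) mod n = (i + n) mod n"
    by (simp add: mod_simps n_eq mult_2 add.assoc)
  then show "(Suc ((i + k) mod n) mod n + k) mod n = i"
    using assms by simp
  show "((i + k) mod n + k) mod n = t" if "t < n" and "Suc t mod n = i"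
    using Suc_mod_add_twice_k[OF \<open>t < n\<close>] \<open>Suc t mod n = i\<close>
    by (simp add: mod_simps mult_2 add.assoc)
  show "(i + (k - 1)) mod n = t" if "t < n" and "Suc t mod n = (i + k) mod n"
  proof -
    have "i + k + 2 * k = i + (k - 1) + n" using k_pos n_eq by simp
    then have "(i + (k - 1)) mod n = ((i + k) mod n + 2 * k) mod n"
      by (metis mod_add_left_eq mod_add_self2)
    then show ?thesis
      using Suc_mod_add_twice_k[OF \<open>t < n\<close>] \<open>Suc t mod n = (i + k) mod n\<close> by simp
  qed
qed

lemma maximally_distant_E_A:
  assumes "i < n"
  shows "maximally_distant (U_adj n) (E ((i + k) mod n)) (A i)"
  unfolding maximally_distant_def U_dist_eq_walk_dist[symmetric]
proof (intro allI impI)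
  define j where "j = (i + k) mod n"
  have "j < n" and si: "Suc i mod n < n" using assms by (simp_all add: j_def)
  note idx = opposite_index_arith[OF assms, folded j_def]
  fix u
  assume "U_adj n (A i) u"
  then consider "u = A (Suc i mod n)" | "u = B i" | t where "t < n" "Suc t mod n = i" "u = A t"
    unfolding U_adj_def U_edge0_def by auto
  then have "U_dist n (E j) u \<le> k + 4"
  proof cases
    case 1
    have "(U_adj n ^^ (k - 1 + 4)) u (E j)"
      unfolding 1 using U_rim_walks(1)[OF si idx(1)] U_column_walks(1)[OF \<open>j < n\<close>]
      by (rule relpowp_trans)
    then show ?thesis by (rule U_dist_le_walk(2)) simp
  next
    case 2
    have "(U_adj n ^^ (k + 3)) u (E j)"
      unfolding 2 using U_rim_walks(2)[OF assms j_def[symmetric]] U_column_walks(3)[OF \<open>j < n\<close>]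
      by (rule relpowp_trans)
    then show ?thesis by (rule U_dist_le_walk(2)) simp
  next
    case 3
    have "(U_adj n ^^ (4 + k)) (E j) u"
      unfolding 3
      using U_walk_sym[OF U_column_walks(1)[OF \<open>j < n\<close>]]
        U_rim_walks(1)[OF \<open>j < n\<close> idx(3)[OF 3(1,2)]]
      by (rule relpowp_trans)
    then show ?thesis by (rule U_dist_le_walk(1)) simp
  qed
  moreover have "k + 4 \<le> U_dist n (E j) (A i)"
    using U_dist_A_opposite_E[OF n_eq assms] U_dist_sym by (simp add: j_def)
  ultimately show "U_dist n (E j) u \<le> U_dist n (E j) (A i)" by simp
qed

lemma maximally_distant_A_E:
  assumes "i < n"
  shows "maximally_distant (U_adj n) (A i) (E ((i + k) mod n))"
  unfolding maximally_distant_def U_dist_eq_walk_dist[symmetric]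
proof (intro allI impI)
  define j where "j = (i + k) mod n"
  have "j < n" and sj: "Suc j mod n < n" using assms by (simp_all add: j_def)
  note idx = opposite_index_arith[OF assms, folded j_def]
  fix v
  assume "U_adj n (E j) v"
  then consider "v = E (Suc j mod n)" | "v = D j" | t where "t < n" "Suc t mod n = j" "v = E t"
    unfolding U_adj_def U_edge0_def by auto
  then have "U_dist n (A i) v \<le> k + 4"
  proof cases
    case 1
    have "(U_adj n ^^ (4 + k)) v (A i)"
      unfolding 1 using U_walk_sym[OF U_column_walks(1)[OF sj]] U_rim_walks(1)[OF sj idx(2)]
      by (rule relpowp_trans)
    then show ?thesis by (rule U_dist_le_walk(2)) simp
  next
    case 2
    have "(U_adj n ^^ (k + 3)) (A i) v"
      unfolding 2 using U_rim_walks(1)[OF assms j_def[symmetric]] U_column_walks(2)[OF \<open>j < n\<close>]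
      by (rule relpowp_trans)
    then show ?thesis by (rule U_dist_le_walk(1)) simp
  next
    case 3
    have "(U_adj n ^^ (k - 1 + 4)) (A i) v"
      unfolding 3 using U_rim_walks(1)[OF assms idx(4)[OF 3(1,2)]] U_column_walks(1)[OF 3(1)]
      by (rule relpowp_trans)
    then show ?thesis by (rule U_dist_le_walk(1)) simp
  qed
  moreover have "k + 4 \<le> U_dist n (A i) (E j)"
    using U_dist_A_opposite_E[OF n_eq assms] by (simp add: j_def)
  ultimately show "U_dist n (A i) v \<le> U_dist n (A i) (E j)" by simp
qed

lemma maximally_distant_D_C:
  assumes "i < n"
  shows "maximally_distant (U_adj n) (D ((i + k) mod n)) (C i)"
  unfolding maximally_distant_def U_dist_eq_walk_dist[symmetric]
proof (intro allI impI)
  define j where "j = (i + k) mod n"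
  have "j < n" using assms by (simp add: j_def)
  note idx = opposite_index_arith[OF assms, folded j_def]
  fix u
  assume "U_adj n (C i) u"
  then consider "u = B i" | "u = D i" | t where "t < n" "Suc t mod n = i" "u = D t"
    unfolding U_adj_def U_edge0_def by auto
  then have "U_dist n (D j) u \<le> k + 2"
  proof cases
    case 1
    have "(U_adj n ^^ (k + 2)) u (D j)"
      unfolding 1 using U_rim_walks(2)[OF assms j_def[symmetric]] U_column_walks(4)[OF \<open>j < n\<close>]
      by (rule relpowp_trans)
    then show ?thesis by (rule U_dist_le_walk(2)) simp
  next
    case 2
    have "(U_adj n ^^ Suc (Suc k)) u (D j)"
      unfolding 2 using U_column_edges(4)[OF assms] U_rim_walks(3)[OF assms j_def[symmetric]]
        U_adj_sym[OF U_column_edges(4)[OF \<open>j < n\<close>]]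
      by (blast intro: relpowp_Suc_I relpowp_Suc_I2)
    then show ?thesis by (rule U_dist_le_walk(2)) simp
  next
    case 3
    have "(U_adj n ^^ Suc (Suc k)) (D j) u"
      unfolding 3
      using U_column_edges(4)[OF \<open>j < n\<close>] U_rim_walks(3)[OF \<open>j < n\<close> idx(3)[OF 3(1,2)]]
        U_adj_sym[OF U_column_edges(4)[OF 3(1)]]
      by (blast intro: relpowp_Suc_I relpowp_Suc_I2)
    then show ?thesis by (rule U_dist_le_walk(1)) simp
  qed
  moreover have "k + 2 \<le> U_dist n (D j) (C i)"
    using U_dist_C_opposite_D[OF n_eq k_pos assms] U_dist_sym by (simp add: j_def)
  ultimately show "U_dist n (D j) u \<le> U_dist n (D j) (C i)" by simp
qed

lemma maximally_distant_C_D: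
  assumes "i < n"
  shows "maximally_distant (U_adj n) (C i) (D ((i + k) mod n))"
  unfolding maximally_distant_def U_dist_eq_walk_dist[symmetric]
proof (intro allI impI)
  define j where "j = (i + k) mod n"
  have "j < n" and sj: "Suc j mod n < n" using assms by (simp_all add: j_def)
  note idx = opposite_index_arith[OF assms, folded j_def]
  fix v
  assume "U_adj n (D j) v"
  then consider "v = C j" | "v = E j" | "v = C (Suc j mod n)"
    unfolding U_adj_def U_edge0_def by auto
  then have "U_dist n (C i) v \<le> k + 2"
  proof cases
    case 1
    have "(U_adj n ^^ Suc (Suc k)) (C i) v"
      unfolding 1
      using U_adj_sym[OF U_column_edges(2)[OF assms]] U_rim_walks(2)[OF assms j_def[symmetric]]
        U_column_edges(2)[OF \<open>j < n\<close>]
      by (blast intro: relpowp_Suc_I relpowp_Suc_I2)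
    then show ?thesis by (rule U_dist_le_walk(1)) simp
  next
    case 2
    have "(U_adj n ^^ (2 + k)) (C i) v"
      unfolding 2 using U_column_walks(5)[OF assms] U_rim_walks(3)[OF assms j_def[symmetric]]
      by (rule relpowp_trans)
    then show ?thesis by (rule U_dist_le_walk(1)) simp
  next
    case 3
    have "(U_adj n ^^ Suc (Suc k)) v (C i)"
      unfolding 3 using U_adj_sym[OF U_column_edges(2)[OF sj]] U_rim_walks(2)[OF sj idx(2)]
        U_column_edges(2)[OF assms]
      by (blast intro: relpowp_Suc_I relpowp_Suc_I2)
    then show ?thesis by (rule U_dist_le_walk(2)) simp
  qed
  moreover have "k + 2 \<le> U_dist n (C i) (D j)"
    using U_dist_C_opposite_D[OF n_eq k_pos assms] by (simp add: j_def)
  ultimately show "U_dist n (C i) v \<le> U_dist n (C i) (D j)" by simp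
qed

lemma inj_on_opposite_vertex: "inj_on (opposite_vertex n k) (A ` {..<n} \<union> C ` {..<n})"
proof (rule inj_onI)
  fix v w
  assume "v \<in> A ` {..<n} \<union> C ` {..<n}" and "w \<in> A ` {..<n} \<union> C ` {..<n}"
    and "opposite_vertex n k v = opposite_vertex n k w"
  then obtain a b where "a < n" "b < n" and "v = A a \<and> w = A b \<or> v = C a \<and> w = C b"
    and "(a + k) mod n = (b + k) mod n"
    unfolding opposite_vertex_def by auto
  then show "v = w" by (metis opposite_index_arith(2))
qed

lemma strong_resolving_set_meets_opposite:
  assumes "strong_resolving_set n S" and "v \<in> A ` {..<n} \<union> C ` {..<n}"
  shows "v \<in> S \<or> opposite_vertex n k v \<in> S"
proof -
  have "0 < n" using n_eq by simp
  from assms(2) obtain i where "i < n" and "v = A i \<or> v = C i" by blast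
  then show ?thesis
  proof (elim disjE)
    assume "v = A i"
    have "A i \<in> S \<or> E ((i + k) mod n) \<in> S"
      by (rule strong_resolving_set_meets_maximally_distant[OF assms(1)])
        (simp_all add: \<open>i < n\<close> \<open>0 < n\<close> maximally_distant_E_A maximally_distant_A_E)
    with \<open>v = A i\<close> show ?thesis by (simp add: opposite_vertex_def)
  next
    assume "v = C i"
    have "C i \<in> S \<or> D ((i + k) mod n) \<in> S"
      by (rule strong_resolving_set_meets_maximally_distant[OF assms(1)])
        (simp_all add: \<open>i < n\<close> \<open>0 < n\<close> maximally_distant_D_C maximally_distant_C_D)
    with \<open>v = C i\<close> show ?thesis by (simp add: opposite_vertex_def)
  qed
qed

end

theorem lemma4p5:
  fixes k n :: nat and S :: "vtx set"
  assumes "k \<ge> 1" and "n = 2 * k + 1"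
    and "strong_resolving_set n S"
  shows "card S \<ge> 2 * n"
proof -
  let ?I = "A ` {..<n} \<union> C ` {..<n}"
  have "finite S"
    using assms(3) unfolding strong_resolving_set_def U_verts_def by (auto intro: finite_subset)
  moreover have "inj_on (opposite_vertex n k) ?I"
    using assms(2,1) by (rule inj_on_opposite_vertex)
  moreover have "opposite_vertex n k ` ?I \<inter> ?I = {}"
    by (auto simp: opposite_vertex_def)
  moreover have "v \<in> S \<or> opposite_vertex n k v \<in> S" if "v \<in> ?I" for v
    using assms(2,1,3) that by (rule strong_resolving_set_meets_opposite)
  ultimately have "card ?I \<le> card S" by (rule card_le_if_meets_pairs)
  moreover have "card ?I = 2 * n"
    by (subst card_Un_disjoint) (auto simp: card_image inj_on_def)
  ultimately show ?thesis by simp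
qed

end
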